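(* Let $h,m$ be positive integers and let $f:\mathbb N\to\mathbb N$ be an increasing computable function such that for every satisfiable $\mathrm{CC}^h[m]$-circuit $\Gamma$ with $n$ inputs, among $2^{f(|\Gamma|)}$ independent uniformly random tuples from $\{0,1\}^n$ there is, with probability at least $1/2$, a tuple on which $\Gamma$ outputs $1$. Then $f^{-1}(n)\le\gamma_{h,m}(n+1)$ (for every $n$ for which $\gamma_{h,m}(n+1)$ is defined).
   Context: For an integer $m\ge 1$ and $A\subseteq\{0,\dots,m-1\}$, a gate $\mathrm{MOD}_m^A$ takes finitely many Boolean inputs (counted with multiplicity) and outputs $1$ if their sum modulo $m$ lies in $A$, and $0$ otherwise. A $\mathrm{CC}^h[m]$-circuit is a depth-$h$ Boolean circuit all of whose gates are of the form $\mathrm{MOD}_m^A$ ($A$ may vary between gates), with Boolean variable inputs and multiple wires allowed. $|\Gamma|$ is the number of gates of $\Gamma$. $\gamma_{h,m}(n)$ is the size of the smallest $\mathrm{CC}^h[m]$-circuit computing the $n$-ary conjunction $\mathrm{AND}_n$ (partial function). For an increasing function $f$, $f^{-1}(k)$ is the largest $n$ with $f(n)\le k$. *)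

theory Defs
  imports "HOL-Probability.Probability_Mass_Function"
begin

text \<open>A gate MOD_m^A: its accepting set A, the list of input variables feeding it
  (with multiplicity) and the list of earlier gates feeding it (with multiplicity).
  A circuit with n inputs is a nonempty list of gates in topological order;
  gate i may only read variables v < n and gates j < i.\<close>

datatype gate = Gate (gacc: "nat set") (gvars: "nat list") (ggates: "nat list")

definition gate_val :: "nat \<Rightarrow> bool list \<Rightarrow> bool list \<Rightarrow> gate \<Rightarrow> bool" where
  "gate_val m x prev g =
     ((length (filter (\<lambda>v. x ! v) (gvars g)) + length (filter (\<lambda>j. prev ! j) (ggates g))) mod m
        \<in> gacc g)"

definition gate_vals :: "nat \<Rightarrow> bool list \<Rightarrow> gate list \<Rightarrow> bool list" where
  "gate_vals m x gs = foldl (\<lambda>prev g. prev @ [gate_val m x prev g]) [] gs"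

definition circ_eval :: "nat \<Rightarrow> gate list \<Rightarrow> bool list \<Rightarrow> bool" where
  "circ_eval m gs x = last (gate_vals m x gs)"

definition gate_depths :: "gate list \<Rightarrow> nat list" where
  "gate_depths gs = foldl (\<lambda>ds g. ds @ [Suc (Max (insert 0 ((\<lambda>j. ds ! j) ` set (ggates g))))]) [] gs"

definition circ_depth :: "gate list \<Rightarrow> nat" where
  "circ_depth gs = Max (insert 0 (set (gate_depths gs)))"

definition wf_circ :: "nat \<Rightarrow> nat \<Rightarrow> gate list \<Rightarrow> bool" where
  "wf_circ m n gs \<longleftrightarrow> gs \<noteq> [] \<and>
     (\<forall>i<length gs. gacc (gs ! i) \<subseteq> {..<m} \<and> (\<forall>v\<in>set (gvars (gs ! i)). v < n)
                     \<and> (\<forall>j\<in>set (ggates (gs ! i)). j < i))"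

definition is_CC :: "nat \<Rightarrow> nat \<Rightarrow> nat \<Rightarrow> gate list \<Rightarrow> bool" where
  "is_CC h m n gs \<longleftrightarrow> wf_circ m n gs \<and> circ_depth gs \<le> h"

definition computes_AND :: "nat \<Rightarrow> nat \<Rightarrow> gate list \<Rightarrow> bool" where
  "computes_AND m n gs \<longleftrightarrow> (\<forall>x. length x = n \<longrightarrow> circ_eval m gs x = (\<forall>b\<in>set x. b))"

definition gamma_defined :: "nat \<Rightarrow> nat \<Rightarrow> nat \<Rightarrow> bool" where
  "gamma_defined h m n \<longleftrightarrow> (\<exists>gs. is_CC h m n gs \<and> computes_AND m n gs)"

definition gamma :: "nat \<Rightarrow> nat \<Rightarrow> nat \<Rightarrow> nat" where
  "gamma h m n = (LEAST s. \<exists>gs. is_CC h m n gs \<and> computes_AND m n gs \<and> length gs = s)"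

definition satisfiable :: "nat \<Rightarrow> nat \<Rightarrow> gate list \<Rightarrow> bool" where
  "satisfiable m n gs \<longleftrightarrow> (\<exists>x. length x = n \<and> circ_eval m gs x)"

text \<open>K independent uniformly random tuples from {0,1}^n.\<close>
definition sample_space :: "nat \<Rightarrow> nat \<Rightarrow> bool list list set" where
  "sample_space n K = {ts. length ts = K \<and> (\<forall>t\<in>set ts. length t = n)}"

definition hit_prob :: "nat \<Rightarrow> nat \<Rightarrow> gate list \<Rightarrow> nat \<Rightarrow> real" where
  "hit_prob m n gs K = measure_pmf.prob (pmf_of_set (sample_space n K))
      {ts. \<exists>t\<in>set ts. circ_eval m gs t}"

end

theory Submission
  imports Defs
begin

text \<open>A circuit computing AND on n+1 inputs is satisfied by exactly one tuple, the all-ones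
  tuple, and K uniform samples hit a fixed tuple with probability at most K / 2^(n+1).
  Applying the hypothesis to a minimal AND circuit of size s therefore gives
  1/2 \<le> 2^(f s) / 2^(n+1), i.e. n \<le> f s, and monotonicity of f turns this into
  f^-1(n) \<le> s.\<close>

lemma card_lists_length_eq_containing_le:
  assumes "finite A"
  shows "card {xs. set xs \<subseteq> A \<and> length xs = K \<and> u \<in> set xs} \<le> K * card A ^ (K - 1)"
proof -
  let ?L = "\<lambda>k. {xs. set xs \<subseteq> A \<and> length xs = k}"
  let ?insert_at = "\<lambda>(i::nat, xs). take i xs @ u # drop i xs"
  have "{xs. set xs \<subseteq> A \<and> length xs = K \<and> u \<in> set xs} \<subseteq> ?insert_at ` ({..<K} \<times> ?L (K - 1))"
  proof
    fix xs assume "xs \<in> {xs. set xs \<subseteq> A \<and> length xs = K \<and> u \<in> set xs}"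
    then have xs: "set xs \<subseteq> A" "length xs = K" "u \<in> set xs" by auto
    then obtain i where i: "i < K" "xs ! i = u" by (metis in_set_conv_nth)
    define ys where "ys = take i xs @ drop (Suc i) xs"
    have "xs = ?insert_at (i, ys)"
      using i xs(2) id_take_nth_drop[of i xs] by (simp add: ys_def)
    moreover have "ys \<in> ?L (K - 1)"
      using xs i by (auto simp: ys_def dest: in_set_takeD in_set_dropD)
    ultimately show "xs \<in> ?insert_at ` ({..<K} \<times> ?L (K - 1))" using i by blast
  qed
  then have "card {xs. set xs \<subseteq> A \<and> length xs = K \<and> u \<in> set xs}
      \<le> card (?insert_at ` ({..<K} \<times> ?L (K - 1)))"
    by (rule card_mono[rotated]) (simp add: finite_lists_length_eq assms)
  also have "\<dots> \<le> card ({..<K} \<times> ?L (K - 1))"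
    by (rule card_image_le) (simp add: finite_lists_length_eq assms)
  also have "\<dots> = K * card A ^ (K - 1)"
    by (simp add: card_cartesian_product card_lists_length_eq assms)
  finally show ?thesis .
qed

lemma sample_space_eq_lists:
  "sample_space n K = {ts. set ts \<subseteq> {t. length t = n} \<and> length ts = K}"
  unfolding sample_space_def by auto

lemma finite_bool_lists_length: "finite {t :: bool list. length t = n}"
  and card_bool_lists_length: "card {t :: bool list. length t = n} = 2 ^ n"
  using finite_lists_length_eq[of "UNIV :: bool set" n] card_lists_length_eq[of "UNIV :: bool set" n]
  by simp_all

lemma finite_sample_space: "finite (sample_space n K)"
  unfolding sample_space_eq_lists by (rule finite_lists_length_eq[OF finite_bool_lists_length])

lemma card_sample_space: "card (sample_space n K) = (2 ^ n) ^ K"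
  unfolding sample_space_eq_lists
  by (simp add: card_lists_length_eq[OF finite_bool_lists_length] card_bool_lists_length)

lemma sample_space_not_empty: "sample_space n K \<noteq> {}"
proof -
  have "replicate K (replicate n True) \<in> sample_space n K" by (simp add: sample_space_def)
  then show ?thesis by blast
qed

lemma card_sample_space_containing_le:
  "card {ts \<in> sample_space n K. t \<in> set ts} \<le> K * (2 ^ n) ^ (K - 1)"
proof -
  have "{ts \<in> sample_space n K. t \<in> set ts}
      = {ts. set ts \<subseteq> {t. length t = n} \<and> length ts = K \<and> t \<in> set ts}"
    by (auto simp: sample_space_eq_lists)
  then show ?thesis
    using card_lists_length_eq_containing_le[OF finite_bool_lists_length[of n], of K t]
    by (simp add: card_bool_lists_length)
qed

lemma computes_AND_iff_all_True:
  assumes "computes_AND m n gs" and "length t = n"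
  shows "circ_eval m gs t \<longleftrightarrow> t = replicate n True"
proof -
  have "circ_eval m gs t \<longleftrightarrow> (\<forall>b\<in>set t. b)" using assms by (simp add: computes_AND_def)
  also have "\<dots> \<longleftrightarrow> t = replicate n True"
    using assms(2) replicate_length_same[of t True] by (metis (full_types) in_set_replicate)
  finally show ?thesis .
qed

lemma computes_AND_satisfiable:
  assumes "computes_AND m n gs"
  shows "satisfiable m n gs"
  using computes_AND_iff_all_True[OF assms, of "replicate n True"]
  unfolding satisfiable_def by (metis length_replicate)

lemma hit_prob_AND_le:
  assumes "computes_AND m n gs" and "K \<ge> 1"
  shows "hit_prob m n gs K \<le> real K / 2 ^ n"
proof -
  let ?S = "sample_space n K" and ?ones = "replicate n True"
  have hits: "?S \<inter> {ts. \<exists>t\<in>set ts. circ_eval m gs t} = {ts \<in> ?S. ?ones \<in> set ts}"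
    using computes_AND_iff_all_True[OF assms(1)] by (auto simp: sample_space_def)
  have "hit_prob m n gs K = card {ts \<in> ?S. ?ones \<in> set ts} / card ?S"
    unfolding hit_prob_def
    by (simp add: measure_pmf_of_set[OF sample_space_not_empty finite_sample_space] hits)
  also have "\<dots> \<le> real (K * (2 ^ n) ^ (K - 1)) / card ?S"
    by (intro divide_right_mono of_nat_mono card_sample_space_containing_le) simp
  also have "\<dots> = real K / 2 ^ n"
  proof -
    have "(2::real) ^ n * (2 ^ n) ^ (K - 1) = (2 ^ n) ^ K"
      using assms(2) by (metis Suc_diff_le diff_Suc_1 power_Suc)
    then show ?thesis by (simp add: card_sample_space field_simps)
  qed
  finally show ?thesis .
qed

lemma AND_inputs_le_if_hit_prob_ge_half:
  assumes "computes_AND m n gs" and "hit_prob m n gs (2 ^ k) \<ge> 1/2"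
  shows "n \<le> Suc k"
proof -
  have "hit_prob m n gs (2 ^ k) \<le> real (2 ^ k) / 2 ^ n"
    by (rule hit_prob_AND_le[OF assms(1)]) simp
  then have "1/2 \<le> real (2 ^ k) / 2 ^ n" using assms(2) by linarith
  then have "(2::real) ^ n \<le> 2 ^ Suc k" by (simp add: field_simps)
  then show ?thesis by (rule power_le_imp_le_exp[rotated]) simp
qed

lemma gamma_attained:
  assumes "gamma_defined h m n"
  obtains gs where "is_CC h m n gs" "computes_AND m n gs" "length gs = gamma h m n"
proof -
  have "\<exists>s gs. is_CC h m n gs \<and> computes_AND m n gs \<and> length gs = s"
    using assms unfolding gamma_defined_def by blast
  then have "\<exists>gs. is_CC h m n gs \<and> computes_AND m n gs \<and> length gs = gamma h m n"
    unfolding gamma_def by (rule LeastI_ex)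
  then show ?thesis using that by blast
qed

theorem proposition6p3:
  fixes h m :: nat and f :: "nat \<Rightarrow> nat"
  assumes "h \<ge> 1" and "m \<ge> 1"
    and "strict_mono f"
    and "\<forall>n gs. is_CC h m n gs \<and> satisfiable m n gs \<longrightarrow>
            hit_prob m n gs (2 ^ f (length gs)) \<ge> 1/2"
  shows "\<forall>n N. gamma_defined h m (Suc n) \<longrightarrow>
            (f N \<le> n \<and> (\<forall>M. f M \<le> n \<longrightarrow> M \<le> N)) \<longrightarrow> N \<le> gamma h m (Suc n)"
proof (intro allI impI)
  fix n N
  assume "gamma_defined h m (Suc n)" and N: "f N \<le> n \<and> (\<forall>M. f M \<le> n \<longrightarrow> M \<le> N)"
  from \<open>gamma_defined h m (Suc n)\<close> obtain gs where gs: "is_CC h m (Suc n) gs" "computes_AND m (Suc n) gs"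
      "length gs = gamma h m (Suc n)"
    by (rule gamma_attained)
  have "hit_prob m (Suc n) gs (2 ^ f (length gs)) \<ge> 1/2"
    using assms(4) gs(1) computes_AND_satisfiable[OF gs(2)] by blast
  then have "n \<le> f (length gs)"
    using AND_inputs_le_if_hit_prob_ge_half[OF gs(2)] by simp
  then have "f N \<le> f (length gs)" using N by linarith
  then show "N \<le> gamma h m (Suc n)"
    using assms(3) gs(3) by (simp add: strict_mono_less_eq)
qed

end
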